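(* Let $\Gamma=(N,A,u)$ be a finite game. Then: (1) Every outcome $\mu\in\Delta A$ that is implementable (by some partially specified data-generating process) is jointly coherent, i.e. $\mathrm{supp}(\mu)\subseteq \mathrm{supp}\,\mathrm{CE}(\Gamma)$. Moreover, if $\mu\in\Delta A$ is jointly coherent, then for every $\epsilon>0$ there exists a partially specified data-generating process that $\epsilon$-implements $\mu$. (2) If $\Gamma$ has rational payoffs (i.e. $u_i(a)\in\mathbb{Q}$ for all $i\in N$, $a\in A$), then an outcome $\mu\in\Delta A$ is implementable if and only if it is jointly coherent.
   Context: A finite game $\Gamma=(N,A,u)$ has a finite set of players $N$, finite action sets $A_i$, $A=\times_{i\in N}A_i$, and utilities $u_i:A\to\mathbb{R}$ (extended multilinearly to mixed action profiles). A correlated equilibrium is $p\in\Delta A$ such that for all $i\in N$, all $a_i$ with $p_{a_i}=\sum_{a_{-i}}p_{a_i,a_{-i}}>0$, and all $b\in A_i$: $\sum_{a_{-i}}p_{a_i,a_{-i}}[u_i(a_i,a_{-i})-u_i(b,a_{-i})]\ge 0$. $\mathrm{CE}(\Gamma)$ denotes the set of correlated equilibria and $\mathrm{supp}\,\mathrm{CE}(\Gamma)=\bigcup_{p\in\mathrm{CE}(\Gamma)}\mathrm{supp}(p)$. An outcome $\mu\in\Delta A$ is jointly coherent if $\mathrm{supp}(\mu)\subseteq\mathrm{supp}\,\mathrm{CE}(\Gamma)$. A partially specified data-generating process is a triple $\mathcal{D}=(M,\eta,\mathcal{F})$ where $M=\times_{i\in N}M_i$ is a finite set of message profiles ($M_i$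 the messages of player $i$), $\eta\in\Delta M$, and $\mathcal{F}\subseteq\{f:M\to\mathbb{R}\}$. Let $\Delta_{\mathcal{D}}=\{q\in\Delta M:\sum_m q_mf(m)=\sum_m\eta_mf(m)\ \forall f\in\mathcal{F}\}$; the players' belief is the unique maximizer $q$ of the Shannon entropy $\mathcal{H}(q)=-\sum_m q_m\log q_m$ (with $0\log 0=0$) over $\Delta_{\mathcal{D}}$. A strategy profile is $\sigma=(\sigma_i)_{i\in N}$ with $\sigma_i:M_i\to\Delta A_i$, and $\sigma(a\mid m)=\prod_i\sigma_i(a_i\mid m_i)$; the outcome is $\eta\circ\sigma\in\Delta A$, $(\eta\circ\sigma)(a)=\sum_m\eta_m\sigma(a\mid m)$. An outcome $\mu$ is implemented by $\mathcal{D}$ if there is $\sigma$ such that (i) $q$ is the maximum-entropy belief over $\Delta_{\mathcal{D}}$; (ii) for all $i\in N$, all $m_i\in M_i$ with $q$-marginal positive, and all $a_i'\in A_i$: $\sum_{m_{-i}}q_{m_i,m_{-i}}[u_i(\sigma_i(m_i),\sigma_{-i}(m_{-i}))-u_i(a_i',\sigma_{-i}(m_{-i}))]\ge 0$; (iii) $\mu=\eta\circ\sigma$. It is $\epsilon$-implemented if (ii) is replaced by the same inequality with right-hand side $-\epsilon$. An outcome is implementable if some partially specified data-generating process implements it. *)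

theory Defs
  imports Complex_Main
begin

(* A finite game: players are the elements of a finite type 'n;
   A :: 'n => 'a set gives the action set of each player;
   u :: 'n => ('n => 'a) => real gives the utilities on pure action profiles. *)

definition profiles :: "('n \<Rightarrow> 'x set) \<Rightarrow> ('n \<Rightarrow> 'x) set" where
  "profiles S = {s. \<forall>i. s i \<in> S i}"

definition is_dist :: "'x set \<Rightarrow> ('x \<Rightarrow> real) \<Rightarrow> bool" where
  "is_dist S p \<longleftrightarrow> (\<forall>x. 0 \<le> p x) \<and> (\<forall>x. x \<notin> S \<longrightarrow> p x = 0) \<and> sum p S = 1"

definition mixed_util ::
  "('n::finite \<Rightarrow> 'a set) \<Rightarrow> ('n \<Rightarrow> ('n \<Rightarrow> 'a) \<Rightarrow> real) \<Rightarrow> 'n \<Rightarrow> ('n \<Rightarrow> 'a \<Rightarrow> real) \<Rightarrow> real" where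
  "mixed_util A u i x = (\<Sum>a\<in>profiles A. (\<Prod>j\<in>UNIV. x j (a j)) * u i a)"

definition pure :: "'a \<Rightarrow> 'a \<Rightarrow> real" where
  "pure b = (\<lambda>c. if c = b then 1 else 0)"

definition correlated_eq ::
  "('n::finite \<Rightarrow> 'a set) \<Rightarrow> ('n \<Rightarrow> ('n \<Rightarrow> 'a) \<Rightarrow> real) \<Rightarrow> (('n \<Rightarrow> 'a) \<Rightarrow> real) \<Rightarrow> bool" where
  "correlated_eq A u p \<longleftrightarrow> is_dist (profiles A) p \<and>
     (\<forall>i. \<forall>ai\<in>A i. (\<Sum>a\<in>{a\<in>profiles A. a i = ai}. p a) > 0 \<longrightarrow>
        (\<forall>b\<in>A i. (\<Sum>a\<in>{a\<in>profiles A. a i = ai}. p a * (u i a - u i (a(i := b)))) \<ge> 0))"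

definition supp_CE ::
  "('n::finite \<Rightarrow> 'a set) \<Rightarrow> ('n \<Rightarrow> ('n \<Rightarrow> 'a) \<Rightarrow> real) \<Rightarrow> ('n \<Rightarrow> 'a) set" where
  "supp_CE A u = (\<Union>p\<in>{p. correlated_eq A u p}. {a. p a \<noteq> 0})"

definition jointly_coherent ::
  "('n::finite \<Rightarrow> 'a set) \<Rightarrow> ('n \<Rightarrow> ('n \<Rightarrow> 'a) \<Rightarrow> real) \<Rightarrow> (('n \<Rightarrow> 'a) \<Rightarrow> real) \<Rightarrow> bool" where
  "jointly_coherent A u \<mu> \<longleftrightarrow> is_dist (profiles A) \<mu> \<and> {a. \<mu> a \<noteq> 0} \<subseteq> supp_CE A u"

(* partially specified data-generating processes (M, eta, F); messages are natural numbers *)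
definition Delta_D ::
  "('n::finite \<Rightarrow> nat set) \<Rightarrow> (('n \<Rightarrow> nat) \<Rightarrow> real) \<Rightarrow> (('n \<Rightarrow> nat) \<Rightarrow> real) set \<Rightarrow> (('n \<Rightarrow> nat) \<Rightarrow> real) set" where
  "Delta_D M \<eta> F = {q. is_dist (profiles M) q \<and>
      (\<forall>f\<in>F. (\<Sum>m\<in>profiles M. q m * f m) = (\<Sum>m\<in>profiles M. \<eta> m * f m))}"

definition entropy :: "'x set \<Rightarrow> ('x \<Rightarrow> real) \<Rightarrow> real" where
  "entropy S q = - (\<Sum>m\<in>S. if q m = 0 then 0 else q m * ln (q m))"

definition maxent_belief ::
  "('n::finite \<Rightarrow> nat set) \<Rightarrow> (('n \<Rightarrow> nat) \<Rightarrow> real) \<Rightarrow> (('n \<Rightarrow> nat) \<Rightarrow> real) set \<Rightarrow> (('n \<Rightarrow> nat) \<Rightarrow> real) \<Rightarrow> bool" where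
  "maxent_belief M \<eta> F q \<longleftrightarrow> q \<in> Delta_D M \<eta> F \<and>
     (\<forall>q'\<in>Delta_D M \<eta> F. entropy (profiles M) q' \<le> entropy (profiles M) q) \<and>
     (\<forall>q'\<in>Delta_D M \<eta> F. entropy (profiles M) q' = entropy (profiles M) q \<longrightarrow> q' = q)"

definition valid_DGP :: "('n::finite \<Rightarrow> nat set) \<Rightarrow> (('n \<Rightarrow> nat) \<Rightarrow> real) \<Rightarrow> bool" where
  "valid_DGP M \<eta> \<longleftrightarrow> (\<forall>i. finite (M i)) \<and> is_dist (profiles M) \<eta>"

definition valid_strategy ::
  "('n \<Rightarrow> 'a set) \<Rightarrow> ('n \<Rightarrow> nat set) \<Rightarrow> ('n \<Rightarrow> nat \<Rightarrow> 'a \<Rightarrow> real) \<Rightarrow> bool" where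
  "valid_strategy A M \<sigma> \<longleftrightarrow> (\<forall>i. \<forall>mi\<in>M i. is_dist (A i) (\<sigma> i mi))"

definition outcome ::
  "('n::finite \<Rightarrow> nat set) \<Rightarrow> (('n \<Rightarrow> nat) \<Rightarrow> real) \<Rightarrow> ('n \<Rightarrow> nat \<Rightarrow> 'a \<Rightarrow> real) \<Rightarrow> ('n \<Rightarrow> 'a) \<Rightarrow> real" where
  "outcome M \<eta> \<sigma> a = (\<Sum>m\<in>profiles M. \<eta> m * (\<Prod>j\<in>UNIV. \<sigma> j (m j) (a j)))"

(* condition (ii) with right-hand side -eps (eps = 0 gives exact implementation) *)
definition eps_optimal ::
  "('n::finite \<Rightarrow> 'a set) \<Rightarrow> ('n \<Rightarrow> ('n \<Rightarrow> 'a) \<Rightarrow> real) \<Rightarrow> ('n \<Rightarrow> nat set) \<Rightarrow>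
   (('n \<Rightarrow> nat) \<Rightarrow> real) \<Rightarrow> ('n \<Rightarrow> nat \<Rightarrow> 'a \<Rightarrow> real) \<Rightarrow> real \<Rightarrow> bool" where
  "eps_optimal A u M q \<sigma> \<epsilon> \<longleftrightarrow>
     (\<forall>i. \<forall>mi\<in>M i. (\<Sum>m\<in>{m\<in>profiles M. m i = mi}. q m) > 0 \<longrightarrow>
        (\<forall>b\<in>A i. (\<Sum>m\<in>{m\<in>profiles M. m i = mi}.
            q m * (mixed_util A u i (\<lambda>j. \<sigma> j (m j))
                   - mixed_util A u i ((\<lambda>j. \<sigma> j (m j))(i := pure b)))) \<ge> - \<epsilon>))"

definition eps_implements ::
  "('n::finite \<Rightarrow> 'a set) \<Rightarrow> ('n \<Rightarrow> ('n \<Rightarrow> 'a) \<Rightarrow> real) \<Rightarrow> ('n \<Rightarrow> nat set) \<Rightarrow>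
   (('n \<Rightarrow> nat) \<Rightarrow> real) \<Rightarrow> (('n \<Rightarrow> nat) \<Rightarrow> real) set \<Rightarrow> real \<Rightarrow> (('n \<Rightarrow> 'a) \<Rightarrow> real) \<Rightarrow> bool" where
  "eps_implements A u M \<eta> F \<epsilon> \<mu> \<longleftrightarrow> valid_DGP M \<eta> \<and>
     (\<exists>\<sigma> q. maxent_belief M \<eta> F q \<and> valid_strategy A M \<sigma> \<and>
            eps_optimal A u M q \<sigma> \<epsilon> \<and> (\<forall>a\<in>profiles A. \<mu> a = outcome M \<eta> \<sigma> a))"

abbreviation implements where
  "implements A u M \<eta> F \<mu> \<equiv> eps_implements A u M \<eta> F 0 \<mu>"

definition implementable ::
  "('n::finite \<Rightarrow> 'a set) \<Rightarrow> ('n \<Rightarrow> ('n \<Rightarrow> 'a) \<Rightarrow> real) \<Rightarrow> (('n \<Rightarrow> 'a) \<Rightarrow> real) \<Rightarrow> bool" where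
  "implementable A u \<mu> \<longleftrightarrow> (\<exists>M \<eta> F. implements A u M \<eta> F \<mu>)"

end

theory Submission
  imports Defs "HOL-Library.FuncSet" "HOL-Library.Countable_Set"
begin

text \<open>
  If \<open>\<sigma>\<close> is optimal against the belief \<open>q\<close>, then \<open>q \<circ> \<sigma>\<close> is a correlated equilibrium:
  for each message the recommended actions are best responses to the conditional belief, and
  summing over messages gives the obedience constraints. The maximum-entropy belief charges
  every message profile charged by \<open>\<eta>\<close>, because entropy has infinite slope at 0. Hence the
  support of \<open>\<eta> \<circ> \<sigma>\<close> lies in that of \<open>q \<circ> \<sigma>\<close>, and so in \<open>supp CE\<close>.

  Averaging correlated equilibria gives one, \<open>p\<close>, whose support contains that of
  \<open>\<mu>\<close>. Messages are pairs (recommended action, tag common to all players), the belief is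
  \<open>q = p \<otimes> r\<close> and the true process is \<open>\<eta> = \<mu> \<otimes> \<nu>\<close>. Take for \<open>F\<close> the indicator of
  \<open>{q = 0}\<close> and \<open>log q\<close>. Every \<open>q'\<close> satisfying these constraints is absolutely continuous with
  respect to \<open>q\<close> and has the same cross-entropy with \<open>log q\<close>, so its entropy deficit is the
  relative entropy to \<open>q\<close>. By Gibbs' inequality, \<open>q\<close> is then the unique maximiser once
  \<open>log q\<close> has the same expectation under \<open>\<eta>\<close> as under \<open>q\<close>, and this single equation is met
  by a suitable choice of the tag weights \<open>r\<close> and \<open>\<nu>\<close>. Obedience of \<open>p\<close> makes following
  the recommendation optimal, and \<open>\<eta> \<circ> \<sigma> = \<mu>\<close>.
\<close>

section \<open>Profiles and distributions\<close>

lemma profiles_eq_Pi: "profiles A = Pi UNIV A"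
  by (auto simp: profiles_def Pi_def)

lemma finite_profiles:
  fixes A :: "'n::finite \<Rightarrow> 'x set"
  assumes "\<And>i. finite (A i)"
  shows "finite (profiles A)"
  using finite_PiE[of UNIV A] assms by (simp add: profiles_eq_Pi PiE_UNIV_domain)

lemma sum_profiles_prod:
  fixes A :: "'n::finite \<Rightarrow> 'x set" and f :: "'n \<Rightarrow> 'x \<Rightarrow> real"
  assumes "\<And>i. finite (A i)"
  shows "(\<Sum>a\<in>profiles A. \<Prod>j\<in>UNIV. f j (a j)) = (\<Prod>j\<in>UNIV. \<Sum>x\<in>A j. f j x)"
  using prod_sum_PiE[of UNIV A f] assms by (simp add: profiles_eq_Pi PiE_UNIV_domain)

lemma is_dist_nonneg: "is_dist S p \<Longrightarrow> 0 \<le> p x"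
  by (simp add: is_dist_def)

lemma sum_mult_eq_0_if_mass_0:
  fixes f g :: "'x \<Rightarrow> real"
  assumes "finite S" "\<And>x. x \<in> S \<Longrightarrow> 0 \<le> f x" "\<not> 0 < sum f S"
  shows "(\<Sum>x\<in>S. f x * g x) = 0"
proof -
  have "sum f S = 0" using assms by (metis linorder_not_le sum_nonneg antisym)
  then have "\<forall>x\<in>S. f x = 0" using assms(1,2) sum_nonneg_eq_0_iff by blast
  then show ?thesis by simp
qed

lemma is_dist_product:
  assumes "finite P" "finite T" "is_dist P w" "is_dist T v"
  shows "is_dist (P \<times> T) (\<lambda>(a, t). w a * v t)"
  using assms by (auto simp: is_dist_def sum.cartesian_product[symmetric] sum_product[symmetric])

lemma sum_product_add:
  assumes "is_dist P w" "is_dist T v"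
  shows "(\<Sum>(a, t)\<in>P \<times> T. w a * v t * (g a + h t)) = (\<Sum>a\<in>P. w a * g a) + (\<Sum>t\<in>T. v t * h t)"
proof -
  have "(\<Sum>(a, t)\<in>P \<times> T. w a * v t * (g a + h t))
      = sum v T * (\<Sum>a\<in>P. w a * g a) + sum w P * (\<Sum>t\<in>T. v t * h t)"
    by (simp add: sum.cartesian_product[symmetric] algebra_simps sum.distrib sum_distrib_left
        sum_distrib_right) (subst sum.swap, simp add: algebra_simps)
  then show ?thesis using assms by (simp add: is_dist_def)
qed

definition pushforward :: "('x \<Rightarrow> 'y) \<Rightarrow> 'x set \<Rightarrow> ('x \<Rightarrow> real) \<Rightarrow> 'y \<Rightarrow> real" where
  "pushforward \<Phi> X w y = (\<Sum>x\<in>{x\<in>X. \<Phi> x = y}. w x)"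

lemma sum_pushforward:
  assumes "finite X" "finite Y" "\<Phi> ` X \<subseteq> Y"
  shows "(\<Sum>y\<in>Y. pushforward \<Phi> X w y * G y) = (\<Sum>x\<in>X. w x * G (\<Phi> x))"
proof -
  have "(\<Sum>y\<in>Y. pushforward \<Phi> X w y * G y) = (\<Sum>y\<in>Y. \<Sum>x\<in>{x\<in>X. \<Phi> x = y}. w x * G (\<Phi> x))"
    unfolding pushforward_def sum_distrib_right by (intro sum.cong refl) auto
  also have "\<dots> = (\<Sum>x\<in>X. w x * G (\<Phi> x))"
    using assms by (rule sum.group)
  finally show ?thesis .
qed

lemma pushforward_apply:
  assumes "inj_on \<Phi> X" "x \<in> X"
  shows "pushforward \<Phi> X w (\<Phi> x) = w x"
proof -
  have "{x'\<in>X. \<Phi> x' = \<Phi> x} = {x}" using assms by (auto dest: inj_onD)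
  then show ?thesis by (simp add: pushforward_def)
qed

lemma pushforward_outside: "y \<notin> \<Phi> ` X \<Longrightarrow> pushforward \<Phi> X w y = 0"
  unfolding pushforward_def by (intro sum.neutral) auto

lemma is_dist_pushforward:
  assumes "finite X" "finite Y" "\<Phi> ` X \<subseteq> Y" "is_dist X w"
  shows "is_dist Y (pushforward \<Phi> X w)"
proof -
  have "pushforward \<Phi> X w y = 0" if "y \<notin> Y" for y
    using that assms(3) by (intro pushforward_outside) blast
  moreover have "sum (pushforward \<Phi> X w) Y = 1"
    using sum_pushforward[OF assms(1-3), of w "\<lambda>_. 1"] assms(4) by (simp add: is_dist_def)
  ultimately show ?thesis
    using assms(4) by (auto simp: is_dist_def pushforward_def intro!: sum_nonneg)
qed

section \<open>Entropy\<close>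

definition xlnx :: "real \<Rightarrow> real" where
  "xlnx x = (if x = 0 then 0 else x * ln x)"

lemma entropy_eq_xlnx: "entropy S q = - (\<Sum>m\<in>S. xlnx (q m))"
  by (simp add: entropy_def xlnx_def)

lemma xlnx_ge_tangent:
  fixes x z :: real
  assumes "0 \<le> x" "0 < z"
  shows "x - z \<le> xlnx x - x * ln z"
proof (cases "x = 0")
  case False
  then have "ln (z / x) \<le> z / x - 1" using assms by (intro ln_le_minus_one) simp
  then have "x * (ln z - ln x) \<le> x * (z / x - 1)"
    using assms False by (simp add: ln_div mult_left_mono)
  then show ?thesis using False by (simp add: xlnx_def algebra_simps)
qed (use assms in \<open>simp add: xlnx_def\<close>)

lemma xlnx_eq_tangent_imp_eq:
  fixes x z :: real
  assumes "0 \<le> x" "0 < z" "xlnx x - x * ln z = x - z"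
  shows "x = z"
proof (cases "x = 0")
  case False
  then have "x * (ln z - ln x) = x * (z / x - 1)" using assms by (simp add: xlnx_def algebra_simps)
  then have "ln (z / x) = z / x - 1" using assms False by (simp add: ln_div)
  then have "z / x = 1" using assms False by (intro ln_eq_minus_one) simp_all
  then show ?thesis using False by simp
qed (use assms in \<open>simp add: xlnx_def\<close>)

lemma xlnx_convex:
  fixes x y t :: real
  assumes "0 \<le> x" "0 \<le> y" "0 \<le> t" "t \<le> 1"
  shows "xlnx ((1 - t) * x + t * y) \<le> (1 - t) * xlnx x + t * xlnx y"
proof (cases "(1 - t) * x + t * y = 0")
  case True
  then have "(1 - t) * x = 0" "t * y = 0" using assms by (smt (verit) mult_nonneg_nonneg)+
  then show ?thesis using True by (auto simp: xlnx_def)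
next
  case False
  let ?z = "(1 - t) * x + t * y"
  have z: "?z > 0" using False assms by (smt (verit) mult_nonneg_nonneg)
  have "(1 - t) * (x - ?z + x * ln ?z) + t * (y - ?z + y * ln ?z) \<le> (1 - t) * xlnx x + t * xlnx y"
    using xlnx_ge_tangent[OF assms(1) z] xlnx_ge_tangent[OF assms(2) z] assms
    by (intro add_mono mult_left_mono) auto
  moreover have "(1 - t) * (x - ?z + x * ln ?z) + t * (y - ?z + y * ln ?z) = ?z * ln ?z"
    by (simp add: algebra_simps)
  ultimately show ?thesis using False by (simp add: xlnx_def)
qed

lemma sum_xlnx_mix_le:
  assumes S: "finite S" and m0: "m0 \<in> S" and q: "is_dist S q" and \<eta>: "is_dist S \<eta>"
    and q_m0: "q m0 = 0" and t: "0 < t" "t \<le> 1"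
  shows "(\<Sum>m\<in>S. xlnx ((1 - t) * q m + t * \<eta> m))
    \<le> (1 - t) * (\<Sum>m\<in>S. xlnx (q m)) + t * (\<Sum>m\<in>S. xlnx (\<eta> m)) + t * \<eta> m0 * ln t"
proof -
  have "xlnx ((1 - t) * q m + t * \<eta> m)
      \<le> (1 - t) * xlnx (q m) + t * xlnx (\<eta> m) + (if m = m0 then t * \<eta> m0 * ln t else 0)" for m
  proof (cases "m = m0 \<and> \<eta> m0 \<noteq> 0")
    case True
    then have "0 < \<eta> m0" using \<eta> by (simp add: is_dist_def order_less_le)
    moreover have "(1 - t) * q m + t * \<eta> m = t * \<eta> m0" using True q_m0 by simp
    ultimately show ?thesis using True q_m0 t by (simp add: xlnx_def ln_mult distrib_left)
  next
    case False
    then have "(if m = m0 then t * \<eta> m0 * ln t else 0) = 0" by auto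
    moreover have "xlnx ((1 - t) * q m + t * \<eta> m) \<le> (1 - t) * xlnx (q m) + t * xlnx (\<eta> m)"
      using xlnx_convex[of "q m" "\<eta> m" t] q \<eta> t by (simp add: is_dist_def)
    ultimately show ?thesis by linarith
  qed
  then have "(\<Sum>m\<in>S. xlnx ((1 - t) * q m + t * \<eta> m))
      \<le> (\<Sum>m\<in>S. (1 - t) * xlnx (q m) + t * xlnx (\<eta> m) + (if m = m0 then t * \<eta> m0 * ln t else 0))"
    by (rule sum_mono)
  also have "\<dots> = (1 - t) * (\<Sum>m\<in>S. xlnx (q m)) + t * (\<Sum>m\<in>S. xlnx (\<eta> m)) + t * \<eta> m0 * ln t"
    using m0 S by (simp add: sum.distrib sum_distrib_left)
  finally show ?thesis .
qed

definition log_density :: "('x \<Rightarrow> real) \<Rightarrow> 'x \<Rightarrow> real" where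
  "log_density q m = (if q m = 0 then 0 else ln (q m))"

lemma mult_log_density: "q m * log_density q m = xlnx (q m)"
  by (simp add: log_density_def xlnx_def)

definition relative_entropy :: "'x set \<Rightarrow> ('x \<Rightarrow> real) \<Rightarrow> ('x \<Rightarrow> real) \<Rightarrow> real" where
  "relative_entropy S q' q = (\<Sum>m\<in>S. xlnx (q' m) - q' m * log_density q m)"

lemma gibbs_inequality:
  assumes S: "finite S" and q: "is_dist S q" and q': "is_dist S q'"
    and abs_cont: "\<And>m. m \<in> S \<Longrightarrow> q m = 0 \<Longrightarrow> q' m = 0"
  shows "0 \<le> relative_entropy S q' q"
    and "relative_entropy S q' q = 0 \<Longrightarrow> q' = q"
proof -
  define gap where "gap m = xlnx (q' m) - q' m * log_density q m - (q' m - q m)" for m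
  have gap_nonneg: "0 \<le> gap m" if "m \<in> S" for m
  proof (cases "q m = 0")
    case False
    then have "0 < q m" using q by (simp add: is_dist_def order_less_le)
    then show ?thesis using xlnx_ge_tangent[of "q' m" "q m"] q' False
      by (simp add: gap_def log_density_def is_dist_def)
  qed (use abs_cont that in \<open>simp add: gap_def xlnx_def\<close>)
  have "(\<Sum>m\<in>S. q' m - q m) = 0" using q q' by (simp add: is_dist_def sum_subtractf)
  then have sum_gap: "relative_entropy S q' q = sum gap S"
    by (simp add: relative_entropy_def gap_def sum_subtractf)
  then show "0 \<le> relative_entropy S q' q"
    using gap_nonneg by (simp add: sum_nonneg)
  assume "relative_entropy S q' q = 0"
  then have gap_0: "gap m = 0" if "m \<in> S" for m
    using sum_nonneg_eq_0_iff[OF S] gap_nonneg sum_gap that by auto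
  show "q' = q"
  proof
    fix m
    show "q' m = q m"
    proof (cases "m \<in> S \<and> q m \<noteq> 0")
      case True
      then have "0 < q m" using q by (simp add: is_dist_def order_less_le)
      moreover have "xlnx (q' m) - q' m * ln (q m) = q' m - q m"
        using gap_0[of m] True by (simp add: gap_def log_density_def)
      ultimately show ?thesis using xlnx_eq_tangent_imp_eq[of "q' m" "q m"] q'
        by (simp add: is_dist_def)
    next
      case False
      then show ?thesis using q q' abs_cont[of m] by (cases "m \<in> S") (auto simp: is_dist_def)
    qed
  qed
qed

section \<open>Maximum-entropy beliefs\<close>

lemma Delta_D_convex:
  assumes "q \<in> Delta_D M \<eta> F" "q' \<in> Delta_D M \<eta> F" "0 \<le> t" "t \<le> 1"
  shows "(\<lambda>m. (1 - t) * q m + t * q' m) \<in> Delta_D M \<eta> F"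
proof -
  have "is_dist (profiles M) (\<lambda>m. (1 - t) * q m + t * q' m)"
    using assms unfolding Delta_D_def is_dist_def
    by (auto simp: sum.distrib sum_distrib_left[symmetric])
  moreover have "(\<Sum>m\<in>profiles M. ((1 - t) * q m + t * q' m) * f m) = (\<Sum>m\<in>profiles M. \<eta> m * f m)"
    if "f \<in> F" for f
  proof -
    have "(\<Sum>m\<in>profiles M. ((1 - t) * q m + t * q' m) * f m)
        = (1 - t) * (\<Sum>m\<in>profiles M. q m * f m) + t * (\<Sum>m\<in>profiles M. q' m * f m)"
      by (simp add: distrib_right sum.distrib sum_distrib_left mult.assoc)
    also have "\<dots> = (\<Sum>m\<in>profiles M. \<eta> m * f m)"
      using assms that by (simp add: Delta_D_def algebra_simps)
    finally show ?thesis .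
  qed
  ultimately show ?thesis by (simp add: Delta_D_def)
qed

text \<open>Moving from q towards \<eta> by a step t gains at least \<open>- t \<eta> m0 ln t\<close> of entropy at a
  message m0 where q vanishes, and this beats the loss of order t elsewhere once t is small.\<close>

lemma maxent_belief_pos:
  assumes finM: "\<And>i. finite (M i)" and me: "maxent_belief M \<eta> F q"
    and \<eta>: "is_dist (profiles M) \<eta>" and pos: "0 < \<eta> m0"
  shows "0 < q m0"
proof (rule ccontr)
  let ?S = "profiles M"
  define E where "E p = (\<Sum>m\<in>?S. xlnx (p m))" for p
  assume "\<not> 0 < q m0"
  have qD: "q \<in> Delta_D M \<eta> F" using me by (simp add: maxent_belief_def)
  then have q: "is_dist ?S q" by (simp add: Delta_D_def)
  then have q_m0: "q m0 = 0" using \<open>\<not> 0 < q m0\<close> by (simp add: is_dist_def order_less_le)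
  have \<eta>D: "\<eta> \<in> Delta_D M \<eta> F" using \<eta> by (simp add: Delta_D_def)
  have m0: "m0 \<in> ?S" using \<eta> pos by (auto simp: is_dist_def)
  have bound: "E q \<le> E \<eta> + \<eta> m0 * ln t" if t: "0 < t" "t \<le> 1" for t
  proof -
    have "E q \<le> E (\<lambda>m. (1 - t) * q m + t * \<eta> m)"
      using me Delta_D_convex[OF qD \<eta>D] t by (simp add: maxent_belief_def entropy_eq_xlnx E_def)
    also have "\<dots> \<le> (1 - t) * E q + t * E \<eta> + t * \<eta> m0 * ln t"
      unfolding E_def
      by (rule sum_xlnx_mix_le[where q = q, OF finite_profiles[of M, OF finM] m0 q \<eta> q_m0 t])
    finally have "t * E q \<le> t * (E \<eta> + \<eta> m0 * ln t)" by (simp add: algebra_simps)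
    then show ?thesis using t by simp
  qed
  define t where "t = min 1 (exp ((E q - E \<eta>) / \<eta> m0 - 1))"
  have "0 < t" "t \<le> 1" by (auto simp: t_def)
  have "ln t \<le> ln (exp ((E q - E \<eta>) / \<eta> m0 - 1))"
    using \<open>0 < t\<close> by (subst ln_le_cancel_iff) (auto simp: t_def)
  moreover have "(E q - E \<eta>) / \<eta> m0 \<le> ln t"
    using bound[OF \<open>0 < t\<close> \<open>t \<le> 1\<close>] pos by (simp add: divide_le_eq mult.commute)
  ultimately show False by simp
qed

lemma maxent_belief_log_constraint:
  assumes finM: "\<And>i. finite (M i)"
    and q: "is_dist (profiles M) q" and \<eta>: "is_dist (profiles M) \<eta>"
    and abs_cont: "\<And>m. q m = 0 \<Longrightarrow> \<eta> m = 0"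
    and log_eq: "(\<Sum>m\<in>profiles M. \<eta> m * log_density q m) = (\<Sum>m\<in>profiles M. q m * log_density q m)"
  shows "maxent_belief M \<eta> {\<lambda>m. of_bool (q m = 0), log_density q} q"
proof -
  let ?S = "profiles M"
  let ?F = "{\<lambda>m. of_bool (q m = 0), log_density q}"
  have S: "finite ?S" using finite_profiles[OF finM] .
  have null_\<eta>: "(\<Sum>m\<in>?S. \<eta> m * of_bool (q m = 0)) = 0"
    using abs_cont by (intro sum.neutral) (simp add: of_bool_def)
  have null_q: "(\<Sum>m\<in>?S. q m * of_bool (q m = 0)) = 0"
    by (rule sum.neutral) simp
  have qD: "q \<in> Delta_D M \<eta> ?F"
    using q null_\<eta> null_q log_eq by (simp add: Delta_D_def)
  have "entropy ?S q' \<le> entropy ?S q \<and> (entropy ?S q' = entropy ?S q \<longrightarrow> q' = q)"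
    if q'D: "q' \<in> Delta_D M \<eta> ?F" for q'
  proof -
    have q': "is_dist ?S q'" using q'D by (simp add: Delta_D_def)
    have "(\<Sum>m\<in>?S. q' m * of_bool (q m = 0)) = 0"
      using q'D null_\<eta> by (simp add: Delta_D_def)
    then have "\<forall>m\<in>?S. q' m * of_bool (q m = 0) = 0"
      using q' by (subst sum_nonneg_eq_0_iff[OF S, symmetric]) (auto simp: is_dist_def)
    then have abs_cont': "q' m = 0" if "m \<in> ?S" "q m = 0" for m
      using that by auto
    have "(\<Sum>m\<in>?S. q' m * log_density q m) = (\<Sum>m\<in>?S. xlnx (q m))"
      using q'D log_eq by (simp add: Delta_D_def mult_log_density)
    then have gain: "entropy ?S q - entropy ?S q' = relative_entropy ?S q' q"
      by (simp add: entropy_eq_xlnx relative_entropy_def sum_subtractf)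
    have "entropy ?S q' \<le> entropy ?S q"
      using gibbs_inequality(1)[OF S q q' abs_cont'] gain by simp
    moreover have "q' = q" if "entropy ?S q' = entropy ?S q"
    proof (rule gibbs_inequality(2)[OF S q q'])
      show "relative_entropy ?S q' q = 0" using gain that by linarith
    qed (rule abs_cont')
    ultimately show ?thesis by blast
  qed
  then show ?thesis using qD by (auto simp: maxent_belief_def)
qed

section \<open>Mixed utilities and obedience\<close>

lemma correlated_eq_iff_obedient:
  fixes A :: "'n::finite \<Rightarrow> 'a set"
  assumes fin: "\<And>i. finite (A i)"
  shows "correlated_eq A u p \<longleftrightarrow> is_dist (profiles A) p \<and>
    (\<forall>i. \<forall>ai\<in>A i. \<forall>b\<in>A i. 0 \<le> (\<Sum>a\<in>{a\<in>profiles A. a i = ai}. p a * (u i a - u i (a(i := b)))))"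
    (is "_ \<longleftrightarrow> _ \<and> (\<forall>i. \<forall>ai\<in>A i. \<forall>b\<in>A i. 0 \<le> ?gain i ai b)")
proof
  assume ce: "correlated_eq A u p"
  then have p: "is_dist (profiles A) p" by (simp add: correlated_eq_def)
  have "0 \<le> ?gain i ai b" if "ai \<in> A i" "b \<in> A i" for i ai b
  proof (cases "0 < (\<Sum>a\<in>{a\<in>profiles A. a i = ai}. p a)")
    case True
    then show ?thesis using ce that by (simp add: correlated_eq_def)
  next
    case False
    then have "?gain i ai b = 0"
      using p finite_profiles[of A, OF fin] by (intro sum_mult_eq_0_if_mass_0) (auto simp: is_dist_def)
    then show ?thesis by simp
  qed
  then show "is_dist (profiles A) p \<and> (\<forall>i. \<forall>ai\<in>A i. \<forall>b\<in>A i. 0 \<le> ?gain i ai b)"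
    using p by blast
qed (simp add: correlated_eq_def)

lemma eps_optimal_0_iff:
  fixes M :: "'n::finite \<Rightarrow> nat set"
  assumes finM: "\<And>i. finite (M i)" and q: "\<And>m. 0 \<le> q m"
  shows "eps_optimal A u M q \<sigma> 0 \<longleftrightarrow> (\<forall>i. \<forall>mi\<in>M i. \<forall>b\<in>A i. 0 \<le> (\<Sum>m\<in>{m\<in>profiles M. m i = mi}.
      q m * (mixed_util A u i (\<lambda>j. \<sigma> j (m j)) - mixed_util A u i ((\<lambda>j. \<sigma> j (m j))(i := pure b)))))"
    (is "_ \<longleftrightarrow> (\<forall>i. \<forall>mi\<in>M i. \<forall>b\<in>A i. 0 \<le> ?gain i mi b)")
proof
  assume opt: "eps_optimal A u M q \<sigma> 0"
  have "0 \<le> ?gain i mi b" if "mi \<in> M i" "b \<in> A i" for i mi b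
  proof (cases "0 < (\<Sum>m\<in>{m\<in>profiles M. m i = mi}. q m)")
    case True
    then show ?thesis using opt that by (simp add: eps_optimal_def)
  next
    case False
    then have "?gain i mi b = 0"
      using q finite_profiles[of M, OF finM] by (intro sum_mult_eq_0_if_mass_0) auto
    then show ?thesis by simp
  qed
  then show "\<forall>i. \<forall>mi\<in>M i. \<forall>b\<in>A i. 0 \<le> ?gain i mi b" by blast
qed (simp add: eps_optimal_def)

lemma correlated_eq_average:
  fixes A :: "'n::finite \<Rightarrow> 'a set"
  assumes fin: "\<And>i. finite (A i)" and S: "finite S" "S \<noteq> {}"
    and ce: "\<And>s. s \<in> S \<Longrightarrow> correlated_eq A u (P s)"
  shows "correlated_eq A u (\<lambda>a. (\<Sum>s\<in>S. P s a) / card S)"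
proof -
  have P: "is_dist (profiles A) (P s)" if "s \<in> S" for s
    using ce[OF that] by (simp add: correlated_eq_def)
  have card: "0 < real (card S)" using S by (simp add: card_gt_0_iff)
  have swap: "(\<Sum>a\<in>B. (\<Sum>s\<in>S. P s a) / card S * g a) = (\<Sum>s\<in>S. \<Sum>a\<in>B. P s a * g a) / card S"
    for B g
    by (simp add: sum_divide_distrib sum_distrib_right sum.swap[of _ B])
  have "sum (\<lambda>a. (\<Sum>s\<in>S. P s a) / card S) (profiles A) = 1"
    using swap[where B = "profiles A" and g = "\<lambda>_. 1"] P card by (simp add: is_dist_def)
  then have "is_dist (profiles A) (\<lambda>a. (\<Sum>s\<in>S. P s a) / card S)"
    using P by (auto simp: is_dist_def intro!: sum_nonneg divide_nonneg_nonneg)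
  moreover have "0 \<le> (\<Sum>a\<in>{a\<in>profiles A. a i = ai}. (\<Sum>s\<in>S. P s a) / card S * (u i a - u i (a(i := b))))"
    if "ai \<in> A i" "b \<in> A i" for i ai b
    unfolding swap
    by (rule divide_nonneg_nonneg, rule sum_nonneg)
      (use ce that in \<open>auto simp: correlated_eq_iff_obedient[OF fin]\<close>)
  ultimately show ?thesis by (simp add: correlated_eq_iff_obedient[OF fin])
qed

lemma prod_update_pure:
  fixes s :: "'n::finite \<Rightarrow> 'a \<Rightarrow> real"
  shows "(\<Prod>j\<in>UNIV. s j (a j)) = s i (a i) * (\<Prod>j\<in>UNIV. (s(i := pure (a i))) j (a j))"
proof -
  have "(\<Prod>j\<in>UNIV. (s(i := pure (a i))) j (a j)) = (\<Prod>j\<in>UNIV-{i}. s j (a j))"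
    by (subst prod.remove[of UNIV i]) (auto simp: pure_def intro!: prod.cong)
  moreover have "(\<Prod>j\<in>UNIV. s j (a j)) = s i (a i) * (\<Prod>j\<in>UNIV-{i}. s j (a j))"
    by (simp add: prod.remove)
  ultimately show ?thesis by simp
qed

lemma prod_pure_eq: "(\<Prod>j\<in>(UNIV::'n::finite set). pure (a j) (a' j)) = of_bool (a = a')"
proof (cases "a = a'")
  case False
  then obtain j where "a j \<noteq> a' j" by auto
  then show ?thesis using False by (intro trans[OF prod_zero]) (auto simp: pure_def intro!: bexI[of _ j])
qed (simp add: pure_def)

lemma mixed_util_update_pure:
  fixes s :: "'n::finite \<Rightarrow> 'a \<Rightarrow> real"
  assumes fin: "\<And>i. finite (A i)"
  shows "mixed_util A u i (s(i := pure c))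
       = (\<Sum>a\<in>{a\<in>profiles A. a i = c}. (\<Prod>j\<in>UNIV. (s(i := pure c)) j (a j)) * u i a)"
  unfolding mixed_util_def
proof (rule sum.mono_neutral_right)
  have "(\<Prod>j\<in>UNIV. (s(i := pure c)) j (a j)) = 0" if "a i \<noteq> c" for a
    using that by (intro prod_zero) (auto simp: pure_def intro!: bexI[of _ i])
  then show "\<forall>a\<in>profiles A - {a\<in>profiles A. a i = c}. (\<Prod>j\<in>UNIV. (s(i := pure c)) j (a j)) * u i a = 0"
    by auto
qed (auto simp: finite_profiles[of A, OF fin])

lemma mixed_util_pure:
  fixes A :: "'n::finite \<Rightarrow> 'a set"
  assumes fin: "\<And>i. finite (A i)" and a: "a \<in> profiles A"
  shows "mixed_util A u i (\<lambda>j. pure (a j)) = u i a"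
  using a finite_profiles[of A, OF fin]
  by (simp add: mixed_util_def prod_pure_eq of_bool_def if_distrib[where f = "\<lambda>x. x * _"] cong: if_cong)

lemma mixed_util_decompose:
  fixes s :: "'n::finite \<Rightarrow> 'a \<Rightarrow> real"
  assumes fin: "\<And>i. finite (A i)"
  shows "mixed_util A u i s = (\<Sum>c\<in>A i. s i c * mixed_util A u i (s(i := pure c)))"
proof -
  have "mixed_util A u i s = (\<Sum>c\<in>A i. \<Sum>a\<in>{a\<in>profiles A. a i = c}. (\<Prod>j\<in>UNIV. s j (a j)) * u i a)"
    unfolding mixed_util_def
    by (rule sum.group[symmetric]) (use fin finite_profiles[of A, OF fin] in \<open>auto simp: profiles_def\<close>)
  also have "\<dots> = (\<Sum>c\<in>A i. s i c * mixed_util A u i (s(i := pure c)))"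
    unfolding mixed_util_update_pure[OF fin] sum_distrib_left
    by (intro sum.cong refl) (auto simp: prod_update_pure[of s _ i])
  finally show ?thesis .
qed

lemma sum_fiber_deviation:
  fixes s :: "'n::finite \<Rightarrow> 'a \<Rightarrow> real"
  assumes fin: "\<And>i. finite (A i)" and ai: "ai \<in> A i" and b: "b \<in> A i"
  shows "(\<Sum>a\<in>{a\<in>profiles A. a i = ai}. (\<Prod>j\<in>UNIV. s j (a j)) * (u i a - u i (a(i := b))))
       = s i ai * (mixed_util A u i (s(i := pure ai)) - mixed_util A u i (s(i := pure b)))"
proof -
  have deviate: "(\<Sum>a\<in>{a\<in>profiles A. a i = ai}. (\<Prod>j\<in>UNIV. (s(i := pure ai)) j (a j)) * u i (a(i := b)))
      = mixed_util A u i (s(i := pure b))"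
    unfolding mixed_util_update_pure[OF fin]
    by (rule sum.reindex_bij_witness[where i="\<lambda>a. a(i := ai)" and j="\<lambda>a. a(i := b)"])
      (use ai b in \<open>auto simp: profiles_def pure_def intro!: prod.cong\<close>)
  show ?thesis
    unfolding deviate[symmetric] unfolding mixed_util_update_pure[OF fin] right_diff_distrib sum_subtractf
      sum_distrib_left
    by (intro arg_cong2[where f = "(-)"] sum.cong refl) (auto simp: prod_update_pure[of s _ i])
qed

lemma weighted_gain_nonneg_of_average_dominates:
  fixes w V :: "'a \<Rightarrow> real"
  assumes C: "finite C" and w: "\<And>c. c \<in> C \<Longrightarrow> 0 \<le> w c" "sum w C = 1"
    and dom: "\<And>b. b \<in> C \<Longrightarrow> V b \<le> (\<Sum>c\<in>C. w c * V c)" and a: "a \<in> C" and b: "b \<in> C"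
  shows "0 \<le> w a * (V a - V b)"
proof -
  let ?avg = "\<Sum>c\<in>C. w c * V c"
  have "(\<Sum>c\<in>C. w c * (?avg - V c)) = 0"
    using w by (simp add: right_diff_distrib sum_subtractf flip: sum_distrib_right)
  then have "w a * (?avg - V a) = 0"
    using sum_nonneg_eq_0_iff[OF C] w dom a by (simp add: sum_nonneg_eq_0_iff[OF C])
  then have "w a = 0 \<or> V a = ?avg" by auto
  then show ?thesis using dom[OF b] w a by auto
qed

lemma is_dist_outcome:
  fixes A :: "'n::finite \<Rightarrow> 'a set"
  assumes fin: "\<And>i. finite (A i)" and q: "is_dist (profiles M) q" and \<sigma>: "valid_strategy A M \<sigma>"
  shows "is_dist (profiles A) (outcome M q \<sigma>)"
proof -
  have \<sigma>_dist: "is_dist (A j) (\<sigma> j (m j))" if "m \<in> profiles M" for m j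
    using \<sigma> that by (auto simp: valid_strategy_def profiles_def)
  have "0 \<le> outcome M q \<sigma> a" for a
    using q \<sigma>_dist unfolding outcome_def
    by (auto simp: is_dist_def intro!: sum_nonneg mult_nonneg_nonneg prod_nonneg)
  moreover have "outcome M q \<sigma> a = 0" if a: "a \<notin> profiles A" for a
  proof -
    obtain j where "a j \<notin> A j" using a by (auto simp: profiles_def)
    then have "(\<Prod>j\<in>UNIV. \<sigma> j (m j) (a j)) = 0" if "m \<in> profiles M" for m
      using \<sigma>_dist[OF that] by (intro prod_zero) (auto simp: is_dist_def)
    then show ?thesis unfolding outcome_def by (simp add: sum.neutral)
  qed
  moreover have "sum (outcome M q \<sigma>) (profiles A) = 1"
  proof -
    have mass_1: "(\<Sum>a\<in>profiles A. \<Prod>j\<in>UNIV. \<sigma> j (m j) (a j)) = 1" if "m \<in> profiles M" for m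
      using \<sigma>_dist[OF that] sum_profiles_prod[of A "\<lambda>j. \<sigma> j (m j)", OF fin]
      by (simp add: is_dist_def)
    have "sum (outcome M q \<sigma>) (profiles A)
        = (\<Sum>m\<in>profiles M. q m * (\<Sum>a\<in>profiles A. \<Prod>j\<in>UNIV. \<sigma> j (m j) (a j)))"
      unfolding outcome_def sum_distrib_left by (rule sum.swap)
    also have "\<dots> = (\<Sum>m\<in>profiles M. q m)"
      by (simp add: mass_1)
    finally show ?thesis using q by (simp add: is_dist_def)
  qed
  ultimately show ?thesis by (simp add: is_dist_def)
qed

lemma optimal_imp_value_ge_deviation:
  fixes A :: "'n::finite \<Rightarrow> 'a set"
  assumes fin: "\<And>i. finite (A i)" and finM: "\<And>i. finite (M i)" and q: "\<And>m. 0 \<le> q m"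
    and opt: "eps_optimal A u M q \<sigma> 0" and mi: "mi \<in> M i" and b: "b \<in> A i"
  defines "V c \<equiv> \<Sum>m\<in>{m\<in>profiles M. m i = mi}. q m * mixed_util A u i ((\<lambda>j. \<sigma> j (m j))(i := pure c))"
  shows "V b \<le> (\<Sum>c\<in>A i. \<sigma> i mi c * V c)"
proof -
  let ?Fb = "{m\<in>profiles M. m i = mi}"
  define W where "W m c = mixed_util A u i ((\<lambda>j. \<sigma> j (m j))(i := pure c))" for m c
  have decompose: "mixed_util A u i (\<lambda>j. \<sigma> j (m j)) = (\<Sum>c\<in>A i. \<sigma> i mi c * W m c)" if "m \<in> ?Fb" for m
    using that mixed_util_decompose[OF fin, where s = "\<lambda>j. \<sigma> j (m j)" and u = u and i = i]
    by (simp add: W_def)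
  have "0 \<le> (\<Sum>m\<in>?Fb. q m * (mixed_util A u i (\<lambda>j. \<sigma> j (m j)) - W m b))"
    using opt mi b q by (simp add: eps_optimal_0_iff[OF finM] W_def)
  also have "\<dots> = (\<Sum>m\<in>?Fb. \<Sum>c\<in>A i. \<sigma> i mi c * (q m * W m c)) - V b"
    by (simp add: decompose V_def W_def right_diff_distrib sum_subtractf sum_distrib_left
        mult.left_commute)
  also have "\<dots> = (\<Sum>c\<in>A i. \<sigma> i mi c * V c) - V b"
    by (subst sum.swap) (simp add: V_def W_def sum_distrib_left)
  finally show ?thesis by simp
qed

lemma correlated_eq_outcome_of_optimal:
  fixes A :: "'n::finite \<Rightarrow> 'a set"
  assumes fin: "\<And>i. finite (A i)" and finM: "\<And>i. finite (M i)"
    and q: "is_dist (profiles M) q" and \<sigma>: "valid_strategy A M \<sigma>"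
    and opt: "eps_optimal A u M q \<sigma> 0"
  shows "correlated_eq A u (outcome M q \<sigma>)"
  unfolding correlated_eq_iff_obedient[OF fin]
proof (intro conjI is_dist_outcome[OF fin q \<sigma>] allI ballI)
  fix i ai b assume ai: "ai \<in> A i" and b: "b \<in> A i"
  define s where "s m = (\<lambda>j. \<sigma> j (m j))" for m :: "'n \<Rightarrow> nat"
  define W where "W m c = mixed_util A u i ((s m)(i := pure c))" for m c
  define V where "V mi c = (\<Sum>m\<in>{m\<in>profiles M. m i = mi}. q m * W m c)" for mi c
  have dominates: "V mi b' \<le> (\<Sum>c\<in>A i. \<sigma> i mi c * V mi c)" if "mi \<in> M i" "b' \<in> A i" for mi b'
    using optimal_imp_value_ge_deviation[OF fin finM is_dist_nonneg[OF q] opt that]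
    by (simp add: V_def W_def s_def)
  have "(\<Sum>a\<in>{a\<in>profiles A. a i = ai}. outcome M q \<sigma> a * (u i a - u i (a(i := b))))
      = (\<Sum>m\<in>profiles M. q m * (\<Sum>a\<in>{a\<in>profiles A. a i = ai}. (\<Prod>j\<in>UNIV. s m j (a j)) * (u i a - u i (a(i := b)))))"
    unfolding outcome_def sum_distrib_right sum_distrib_left
    by (subst sum.swap) (simp add: s_def mult.assoc)
  also have "\<dots> = (\<Sum>m\<in>profiles M. q m * (\<sigma> i (m i) ai * (W m ai - W m b)))"
    unfolding sum_fiber_deviation[where A = A, OF fin ai b] W_def by (simp add: s_def)
  also have "\<dots> = (\<Sum>mi\<in>M i. \<sigma> i mi ai * (V mi ai - V mi b))"
    unfolding V_def
    by (subst sum.group[symmetric, of "profiles M" "M i" "\<lambda>m. m i"])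
      (use finite_profiles[of M, OF finM] finM in \<open>auto simp: profiles_def sum_distrib_left
        sum_subtractf algebra_simps intro!: sum.cong\<close>)
  also have "\<dots> \<ge> 0"
    using \<sigma> fin ai b dominates
    by (intro sum_nonneg weighted_gain_nonneg_of_average_dominates[where C = "A i"])
      (auto simp: valid_strategy_def is_dist_def)
  finally show "0 \<le> (\<Sum>a\<in>{a\<in>profiles A. a i = ai}. outcome M q \<sigma> a * (u i a - u i (a(i := b))))" .
qed

lemma implements_imp_jointly_coherent:
  fixes A :: "'n::finite \<Rightarrow> 'a set"
  assumes fin: "\<And>i. finite (A i)" and \<mu>: "is_dist (profiles A) \<mu>"
    and imp: "implements A u M \<eta> F \<mu>"
  shows "jointly_coherent A u \<mu>"
proof -
  from imp obtain \<sigma> q where dgp: "valid_DGP M \<eta>" and me: "maxent_belief M \<eta> F q"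
    and \<sigma>: "valid_strategy A M \<sigma>" and opt: "eps_optimal A u M q \<sigma> 0"
    and out: "\<forall>a\<in>profiles A. \<mu> a = outcome M \<eta> \<sigma> a"
    by (auto simp: eps_implements_def)
  have finM: "\<And>i. finite (M i)" and \<eta>: "is_dist (profiles M) \<eta>"
    using dgp by (auto simp: valid_DGP_def)
  have q: "is_dist (profiles M) q" using me by (simp add: maxent_belief_def Delta_D_def)
  have "outcome M q \<sigma> a \<noteq> 0" if "\<mu> a \<noteq> 0" for a
  proof -
    have "a \<in> profiles A" using that \<mu> by (auto simp: is_dist_def)
    then have "outcome M \<eta> \<sigma> a \<noteq> 0" using out that by simp
    then obtain m where m: "m \<in> profiles M" and "\<eta> m * (\<Prod>j\<in>UNIV. \<sigma> j (m j) (a j)) \<noteq> 0"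
      unfolding outcome_def by (rule sum.not_neutral_contains_not_neutral)
    moreover have "0 \<le> (\<Prod>j\<in>UNIV. \<sigma> j (m j) (a j))"
      using \<sigma> m by (auto simp: valid_strategy_def profiles_def is_dist_def intro!: prod_nonneg)
    ultimately have "0 < \<eta> m" "0 < (\<Prod>j\<in>UNIV. \<sigma> j (m j) (a j))"
      using is_dist_nonneg[OF \<eta>, of m] by (auto simp: order_less_le)
    then have "0 < q m * (\<Prod>j\<in>UNIV. \<sigma> j (m j) (a j))"
      using maxent_belief_pos[OF finM me \<eta>] by simp
    also have "\<dots> \<le> outcome M q \<sigma> a" unfolding outcome_def
      using q \<sigma> finite_profiles[of M, OF finM] m
      by (intro member_le_sum) (auto simp: is_dist_def valid_strategy_def profiles_def
          intro!: mult_nonneg_nonneg prod_nonneg)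
    finally show ?thesis by simp
  qed
  then show ?thesis
    using \<mu> correlated_eq_outcome_of_optimal[OF fin finM q \<sigma> opt]
    unfolding jointly_coherent_def supp_CE_def by blast
qed

section \<open>Implementing jointly coherent outcomes\<close>

lemma jointly_coherent_imp_correlated_eq_pos:
  fixes A :: "'n::finite \<Rightarrow> 'a set"
  assumes fin: "\<And>i. finite (A i)" and jc: "jointly_coherent A u \<mu>"
  obtains p where "correlated_eq A u p" "\<And>a. \<mu> a \<noteq> 0 \<Longrightarrow> 0 < p a"
proof -
  define S where "S = {a. \<mu> a \<noteq> 0}"
  have \<mu>: "is_dist (profiles A) \<mu>" using jc by (simp add: jointly_coherent_def)
  then have "S \<subseteq> profiles A" by (auto simp: S_def is_dist_def)
  then have S: "finite S" using finite_profiles[of A, OF fin] by (rule finite_subset)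
  have "S \<noteq> {}"
  proof
    assume "S = {}"
    then have "sum \<mu> (profiles A) = 0" by (simp add: S_def)
    then show False using \<mu> by (simp add: is_dist_def)
  qed
  have "\<forall>a\<in>S. \<exists>p. correlated_eq A u p \<and> p a \<noteq> 0"
    using jc by (auto simp: jointly_coherent_def supp_CE_def S_def)
  then obtain P where P: "\<And>a. a \<in> S \<Longrightarrow> correlated_eq A u (P a) \<and> P a a \<noteq> 0" by metis
  have "0 < (\<Sum>s\<in>S. P s a) / card S" if a: "a \<in> S" for a
  proof -
    have nonneg: "0 \<le> P s x" if "s \<in> S" for s x
      using P[OF that] by (simp add: correlated_eq_def is_dist_def)
    then have "0 < P a a" using P[OF a] a by (simp add: order_less_le)
    also have "P a a \<le> (\<Sum>s\<in>S. P s a)" using a S by (intro member_le_sum) (auto intro: nonneg)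
    finally show ?thesis using \<open>S \<noteq> {}\<close> S by (simp add: card_gt_0_iff)
  qed
  moreover have "correlated_eq A u (\<lambda>a. (\<Sum>s\<in>S. P s a) / card S)"
    using P by (intro correlated_eq_average[OF fin S \<open>S \<noteq> {}\<close>]) blast
  ultimately show ?thesis using that by (simp add: S_def)
qed

lemma log_gap_two_level:
  fixes l :: real
  assumes N: "1 \<le> N"
  defines "r \<equiv> \<lambda>t::nat. if t = 0 then 1/2 else if t \<le> N then 1 / (2 * real N) else 0"
    and "\<nu> \<equiv> \<lambda>t::nat. if t = 0 then l else if t = 1 then 1 - l else 0"
  shows "(\<Sum>t\<le>N. \<nu> t * ln (r t)) - (\<Sum>t\<le>N. r t * ln (r t)) = (l - 1/2) * ln N"
proof -
  have ln_r: "ln (1 / (2 * real N)) = ln (1/2) - ln N" using N by (simp add: ln_div ln_mult)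
  have "(\<Sum>t\<le>N. \<nu> t * ln (r t)) = l * ln (1/2) + (1 - l) * ln (1 / (2 * real N))"
    unfolding sum.atMost_shift using N
    by (simp add: \<nu>_def r_def if_distrib[where f="\<lambda>x. x * ln (1 / (2 * real N))"] cong: if_cong)
  moreover have "(\<Sum>t\<le>N. r t * ln (r t)) = 1/2 * ln (1/2) + 1/2 * ln (1 / (2 * real N))"
    unfolding sum.atMost_shift using N by (simp add: r_def)
  ultimately show ?thesis unfolding ln_r by (simp add: algebra_simps)
qed

lemma log_gap_tags:
  fixes D :: real
  obtains N :: nat and r \<nu> where "is_dist {..N} r" "is_dist {..N} \<nu>" "\<And>t. t \<in> {..N} \<Longrightarrow> 0 < r t"
    "(\<Sum>t\<le>N. \<nu> t * ln (r t)) - (\<Sum>t\<le>N. r t * ln (r t)) = D"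
proof -
  define N where "N = Suc (nat \<lceil>exp (2 * \<bar>D\<bar>)\<rceil>)"
  have "0 \<le> \<lceil>exp (2 * \<bar>D\<bar>)\<rceil>" by (simp add: less_trans[OF _ exp_gt_zero])
  then have "real N = 1 + of_int \<lceil>exp (2 * \<bar>D\<bar>)\<rceil>" by (simp add: N_def)
  then have N_ge: "exp (2 * \<bar>D\<bar>) < N" using le_of_int_ceiling[of "exp (2 * \<bar>D\<bar>)"] by linarith
  then have N: "2 \<le> N" using one_le_exp_iff[of "2 * \<bar>D\<bar>"] by linarith
  have "2 * \<bar>D\<bar> < ln N" using N_ge N by (simp add: ln_less_cancel_iff[symmetric])
  moreover have "0 < ln (real N)" using N by simp
  ultimately have "\<bar>D / ln N\<bar> \<le> 1/2" by (simp add: abs_divide field_simps)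
  define l where "l = 1/2 + D / ln N"
  have l: "0 \<le> l" "l \<le> 1"
    using abs_le_D1[OF \<open>\<bar>D / ln N\<bar> \<le> 1/2\<close>] abs_le_D2[OF \<open>\<bar>D / ln N\<bar> \<le> 1/2\<close>]
    unfolding l_def by linarith+
  define r where "r \<equiv> \<lambda>t::nat. if t = 0 then 1/2 else if t \<le> N then 1 / (2 * real N) else 0"
  define \<nu> where "\<nu> \<equiv> \<lambda>t::nat. if t = 0 then l else if t = 1 then 1 - l else 0"
  show ?thesis
  proof
    show "is_dist {..N} r" using N by (auto simp: is_dist_def r_def sum.atMost_shift)
    show "is_dist {..N} \<nu>" using N l by (auto simp: is_dist_def \<nu>_def sum.atMost_shift)
    show "0 < r t" if "t \<in> {..N}" for t using that N by (auto simp: r_def)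
    show "(\<Sum>t\<le>N. \<nu> t * ln (r t)) - (\<Sum>t\<le>N. r t * ln (r t)) = D"
      using log_gap_two_level[of N l] N \<open>0 < ln N\<close> by (simp add: r_def \<nu>_def l_def)
  qed
qed

text \<open>A message encodes a recommended action together with a tag shared by all players; the tags
  give the freedom needed to meet the log-likelihood constraint of \<open>maxent_belief_log_constraint\<close>.\<close>

locale tagged_messages =
  fixes A :: "'n::finite \<Rightarrow> 'a set" and T :: "nat set"
  assumes finite_actions: "\<And>i. finite (A i)" and finite_tags: "finite T"
begin

definition msg :: "'a \<Rightarrow> nat \<Rightarrow> nat" where
  "msg x t = prod_encode (to_nat_on (\<Union>i. A i) x, t)"

definition msg_action :: "nat \<Rightarrow> 'a" where
  "msg_action n = from_nat_into (\<Union>i. A i) (fst (prod_decode n))"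

definition messages :: "'n \<Rightarrow> nat set" where
  "messages i = (\<lambda>(x, t). msg x t) ` (A i \<times> T)"

definition tagged :: "('n \<Rightarrow> 'a) \<times> nat \<Rightarrow> 'n \<Rightarrow> nat" where
  "tagged = (\<lambda>(a, t) i. msg (a i) t)"

definition recommend :: "'n \<Rightarrow> nat \<Rightarrow> 'a \<Rightarrow> real" where
  "recommend i n = pure (msg_action n)"

abbreviation encode :: "(('n \<Rightarrow> 'a) \<times> nat \<Rightarrow> real) \<Rightarrow> ('n \<Rightarrow> nat) \<Rightarrow> real" where
  "encode \<equiv> pushforward tagged (profiles A \<times> T)"

lemma countable_actions: "countable (\<Union>i. A i)"
  using finite_actions by (simp add: countable_finite)

lemma msg_eq_iff:
  assumes "x \<in> A i" "y \<in> A j"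
  shows "msg x t = msg y s \<longleftrightarrow> x = y \<and> t = s"
  using assms inj_on_to_nat_on[OF countable_actions] by (auto simp: msg_def dest: inj_onD)

lemma msg_action_msg: "x \<in> A i \<Longrightarrow> msg_action (msg x t) = x"
  using from_nat_into_to_nat_on[OF countable_actions, of x] by (auto simp: msg_def msg_action_def)

lemma finite_messages: "finite (messages i)"
  using finite_actions finite_tags by (simp add: messages_def)

lemma finite_profiles_messages: "finite (profiles messages)"
  using finite_profiles[of messages, OF finite_messages] .

lemma tagged_in_profiles: "tagged ` (profiles A \<times> T) \<subseteq> profiles messages"
  by (auto simp: tagged_def messages_def profiles_def)

lemma inj_tagged: "inj_on tagged (profiles A \<times> T)"
proof (rule inj_onI, clarify)
  fix a t b s assume ab: "a \<in> profiles A" "b \<in> profiles A" and eq: "tagged (a, t) = tagged (b, s)"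
  have "a i = b i \<and> t = s" for i
  proof -
    have "msg (a i) t = msg (b i) s" using fun_cong[OF eq, of i] by (simp add: tagged_def)
    then show ?thesis using msg_eq_iff[of "a i" i "b i" i] ab by (simp add: profiles_def)
  qed
  then show "a = b \<and> t = s" by auto
qed

lemma valid_strategy_recommend: "valid_strategy A messages recommend"
  by (auto simp: valid_strategy_def messages_def recommend_def msg_action_msg is_dist_def pure_def
      finite_actions)

lemma recommend_tagged: "a \<in> profiles A \<Longrightarrow> recommend j (tagged (a, t) j) = pure (a j)"
  using msg_action_msg[of "a j" j] by (simp add: profiles_def recommend_def tagged_def)

lemma is_dist_encode: "is_dist (profiles A \<times> T) w \<Longrightarrow> is_dist (profiles messages) (encode w)"
  using finite_profiles[of A, OF finite_actions] finite_tags finite_profiles_messages tagged_in_profiles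
  by (intro is_dist_pushforward) auto

lemma sum_encode:
  "(\<Sum>m\<in>profiles messages. encode w m * G m) = (\<Sum>x\<in>profiles A \<times> T. w x * G (tagged x))"
  using finite_profiles[of A, OF finite_actions] finite_tags finite_profiles_messages tagged_in_profiles
  by (intro sum_pushforward) auto

lemma outcome_encode:
  assumes \<nu>: "is_dist T \<nu>" and a: "a \<in> profiles A"
  shows "outcome messages (encode (\<lambda>(a, t). \<mu> a * \<nu> t)) recommend a = \<mu> a"
proof -
  have "outcome messages (encode (\<lambda>(a, t). \<mu> a * \<nu> t)) recommend a
      = (\<Sum>(a', t)\<in>profiles A \<times> T. \<mu> a' * \<nu> t * of_bool (a' = a))"
    unfolding outcome_def sum_encode
    by (intro sum.cong refl) (auto simp: recommend_tagged prod_pure_eq)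
  also have "\<dots> = (\<Sum>t\<in>T. \<mu> a * \<nu> t)"
    using a finite_profiles[of A, OF finite_actions]
    by (simp add: sum.cartesian_product[symmetric] sum.swap[where A = "profiles A"] of_bool_def
        if_distrib[where f = "\<lambda>x. _ * x"] cong: if_cong)
  also have "\<dots> = \<mu> a" using \<nu> by (simp add: is_dist_def flip: sum_distrib_left)
  finally show ?thesis .
qed

lemma recommend_obedient:
  assumes p: "correlated_eq A u p" and r: "\<And>t. 0 \<le> r t"
  shows "eps_optimal A u messages (encode (\<lambda>(a, t). p a * r t)) recommend 0"
  unfolding eps_optimal_def
proof (intro allI ballI impI)
  fix i mi b assume mi: "mi \<in> messages i" and b: "b \<in> A i"
  then obtain x0 t0 where x0: "x0 \<in> A i" and t0: "t0 \<in> T" and mi_eq: "mi = msg x0 t0"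
    by (auto simp: messages_def)
  define gain where "gain m = mixed_util A u i (\<lambda>j. recommend j (m j))
    - mixed_util A u i ((\<lambda>j. recommend j (m j))(i := pure b))" for m
  have gain_tagged: "gain (tagged (a, t)) = u i a - u i (a(i := b))" if "a \<in> profiles A" for a t
  proof -
    have "(\<lambda>j. recommend j (tagged (a, t) j)) = (\<lambda>j. pure (a j))"
      using that by (simp add: recommend_tagged)
    moreover have "(\<lambda>j. pure (a j))(i := pure b) = (\<lambda>j. pure ((a(i := b)) j))" by auto
    moreover have "a(i := b) \<in> profiles A" using that b by (simp add: profiles_def)
    ultimately show ?thesis
      using that mixed_util_pure[of A, OF finite_actions] by (simp only: gain_def)
  qed
  have fiber: "tagged (a, t) i = msg x0 t0 \<longleftrightarrow> a i = x0 \<and> t = t0" if "a \<in> profiles A" for a t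
    using that msg_eq_iff[of "a i" i x0 i] x0 by (simp add: tagged_def profiles_def)
  have "(\<Sum>m\<in>{m\<in>profiles messages. m i = mi}. encode (\<lambda>(a, t). p a * r t) m * gain m)
      = (\<Sum>m\<in>profiles messages. encode (\<lambda>(a, t). p a * r t) m * (if m i = mi then gain m else 0))"
    using finite_profiles_messages by (auto simp: sum.inter_filter intro!: sum.cong)
  also have "\<dots> = (\<Sum>a\<in>profiles A. \<Sum>t\<in>T.
      if a i = x0 \<and> t = t0 then p a * r t * (u i a - u i (a(i := b))) else 0)"
    unfolding sum_encode mi_eq sum.cartesian_product by (intro sum.cong refl) (auto simp: fiber gain_tagged)
  also have "\<dots> = (\<Sum>a\<in>profiles A. if a i = x0 then r t0 * (p a * (u i a - u i (a(i := b)))) else 0)"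
    using t0 finite_tags by (intro sum.cong refl) (simp add: algebra_simps)
  also have "\<dots> = r t0 * (\<Sum>a\<in>{a\<in>profiles A. a i = x0}. p a * (u i a - u i (a(i := b))))"
    using finite_profiles[of A, OF finite_actions]
    by (simp add: sum.inter_filter sum_distrib_left if_distrib[where f = "\<lambda>x. r t0 * x"] cong: if_cong)
  also have "\<dots> \<ge> 0"
    using p x0 b r by (simp add: correlated_eq_iff_obedient[OF finite_actions])
  finally show "- 0 \<le> (\<Sum>m\<in>{m\<in>profiles messages. m i = mi}. encode (\<lambda>(a, t). p a * r t) m * gain m)"
    by simp
qed

lemma encode_product_tagged:
  "x \<in> profiles A \<times> T \<Longrightarrow> encode w (tagged x) = w x"
  by (rule pushforward_apply[OF inj_tagged])

lemma encode_product_eq_0: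
  assumes supp: "\<And>a. \<mu> a \<noteq> 0 \<Longrightarrow> 0 < p a" and r: "\<And>t. t \<in> T \<Longrightarrow> 0 < r t"
    and q_m: "encode (\<lambda>(a, t). p a * r t) m = 0"
  shows "encode (\<lambda>(a, t). \<mu> a * \<nu> t) m = 0"
proof (cases "m \<in> tagged ` (profiles A \<times> T)")
  case True
  then obtain a t where at: "(a, t) \<in> profiles A \<times> T" and m: "m = tagged (a, t)" by auto
  then have "p a = 0" using q_m r[of t] by (simp add: encode_product_tagged)
  then show ?thesis using supp[of a] at m by (auto simp: encode_product_tagged)
qed (simp add: pushforward_outside)

lemma sum_encode_log_density:
  assumes r: "\<And>t. t \<in> T \<Longrightarrow> 0 < r t" and w: "is_dist (profiles A) w" and v: "is_dist T v" and supp: "\<And>a. w a \<noteq> 0 \<Longrightarrow> 0 < p a"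
  shows "(\<Sum>m\<in>profiles messages. encode (\<lambda>(a, t). w a * v t) m * log_density (encode (\<lambda>(a, t). p a * r t)) m)
       = (\<Sum>a\<in>profiles A. w a * log_density p a) + (\<Sum>t\<in>T. v t * ln (r t))"
proof -
  have "w a * v t * log_density (encode (\<lambda>(a, t). p a * r t)) (tagged (a, t))
      = w a * v t * (log_density p a + ln (r t))" if "a \<in> profiles A" "t \<in> T" for a t
  proof (cases "w a = 0")
    case False
    then show ?thesis
      using that supp[OF False] r[of t]
      by (simp add: encode_product_tagged log_density_def ln_mult)
  qed simp
  then have "(\<Sum>m\<in>profiles messages. encode (\<lambda>(a, t). w a * v t) m * log_density (encode (\<lambda>(a, t). p a * r t)) m)
      = (\<Sum>(a, t)\<in>profiles A \<times> T. w a * v t * (log_density p a + ln (r t)))"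
    unfolding sum_encode by (intro sum.cong refl) auto
  also have "\<dots> = (\<Sum>a\<in>profiles A. w a * log_density p a) + (\<Sum>t\<in>T. v t * ln (r t))"
    using w v by (rule sum_product_add)
  finally show ?thesis .
qed


lemma encode_log_constraint:
  assumes p: "is_dist (profiles A) p" and r: "is_dist T r" "\<And>t. t \<in> T \<Longrightarrow> 0 < r t"
    and \<mu>: "is_dist (profiles A) \<mu>" and \<nu>: "is_dist T \<nu>" and supp: "\<And>a. \<mu> a \<noteq> 0 \<Longrightarrow> 0 < p a"
    and gap: "(\<Sum>t\<in>T. \<nu> t * ln (r t)) - (\<Sum>t\<in>T. r t * ln (r t))
      = (\<Sum>a\<in>profiles A. p a * log_density p a) - (\<Sum>a\<in>profiles A. \<mu> a * log_density p a)"
  shows "(\<Sum>m\<in>profiles messages. encode (\<lambda>(a, t). \<mu> a * \<nu> t) m * log_density (encode (\<lambda>(a, t). p a * r t)) m)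
    = (\<Sum>m\<in>profiles messages. encode (\<lambda>(a, t). p a * r t) m * log_density (encode (\<lambda>(a, t). p a * r t)) m)"
proof -
  have "(\<Sum>m\<in>profiles messages. encode (\<lambda>(a, t). \<mu> a * \<nu> t) m * log_density (encode (\<lambda>(a, t). p a * r t)) m)
      = (\<Sum>a\<in>profiles A. \<mu> a * log_density p a) + (\<Sum>t\<in>T. \<nu> t * ln (r t))"
    by (rule sum_encode_log_density) (use r \<mu> \<nu> supp in auto)
  moreover have "(\<Sum>m\<in>profiles messages. encode (\<lambda>(a, t). p a * r t) m * log_density (encode (\<lambda>(a, t). p a * r t)) m)
      = (\<Sum>a\<in>profiles A. p a * log_density p a) + (\<Sum>t\<in>T. r t * ln (r t))"
    by (rule sum_encode_log_density) (use r p in \<open>auto simp: is_dist_def order_less_le\<close>)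
  ultimately show ?thesis using gap by linarith
qed
end

lemma implements_of_correlated_eq:
  fixes A :: "'n::finite \<Rightarrow> 'a set"
  assumes fin: "\<And>i. finite (A i)" and p: "correlated_eq A u p" and \<mu>: "is_dist (profiles A) \<mu>"
    and supp: "\<And>a. \<mu> a \<noteq> 0 \<Longrightarrow> 0 < p a"
  shows "\<exists>M \<eta> F. implements A u M \<eta> F \<mu>"
proof -
  have p_dist: "is_dist (profiles A) p" using p by (simp add: correlated_eq_def)
  obtain N :: nat and r \<nu> where r: "is_dist {..N} r" and \<nu>: "is_dist {..N} \<nu>"
    and r_pos: "\<And>t. t \<in> {..N} \<Longrightarrow> 0 < r t"
    and gap: "(\<Sum>t\<le>N. \<nu> t * ln (r t)) - (\<Sum>t\<le>N. r t * ln (r t))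
      = (\<Sum>a\<in>profiles A. p a * log_density p a) - (\<Sum>a\<in>profiles A. \<mu> a * log_density p a)"
    by (rule log_gap_tags) (rule that)
  interpret tagged_messages A "{..N}" by unfold_locales (simp_all add: fin)
  define q where "q = encode (\<lambda>(a, t). p a * r t)"
  define \<eta> where "\<eta> = encode (\<lambda>(a, t). \<mu> a * \<nu> t)"
  have q: "is_dist (profiles messages) q" and \<eta>: "is_dist (profiles messages) \<eta>"
    unfolding q_def \<eta>_def using fin p_dist r \<mu> \<nu>
    by (auto intro!: is_dist_encode is_dist_product finite_profiles)
  have "maxent_belief messages \<eta> {\<lambda>m. of_bool (q m = 0), log_density q} q"
  proof (rule maxent_belief_log_constraint[OF finite_messages q \<eta>])
    show "\<eta> m = 0" if "q m = 0" for m
      using encode_product_eq_0[OF supp r_pos, where m = m and \<nu> = \<nu>] that by (simp add: q_def \<eta>_def)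
    show "(\<Sum>m\<in>profiles messages. \<eta> m * log_density q m) = (\<Sum>m\<in>profiles messages. q m * log_density q m)"
      unfolding q_def \<eta>_def using p_dist r r_pos \<mu> \<nu> supp gap by (rule encode_log_constraint)
  qed
  moreover have "eps_optimal A u messages q recommend 0"
    unfolding q_def using p is_dist_nonneg[OF r] by (rule recommend_obedient)
  moreover have "\<forall>a\<in>profiles A. \<mu> a = outcome messages \<eta> recommend a"
    using outcome_encode[OF \<nu>] by (simp add: \<eta>_def)
  ultimately have "implements A u messages \<eta> {\<lambda>m. of_bool (q m = 0), log_density q} \<mu>"
    using finite_messages \<eta> valid_strategy_recommend
    unfolding eps_implements_def valid_DGP_def by blast
  then show ?thesis by blast
qed

lemma jointly_coherent_imp_implementable:
  fixes A :: "'n::finite \<Rightarrow> 'a set"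
  assumes fin: "\<And>i. finite (A i)" and jc: "jointly_coherent A u \<mu>"
  shows "implementable A u \<mu>"
proof -
  obtain p where "correlated_eq A u p" "\<And>a. \<mu> a \<noteq> 0 \<Longrightarrow> 0 < p a"
    using jointly_coherent_imp_correlated_eq_pos[OF fin jc] by blast
  then show ?thesis
    using implements_of_correlated_eq[where A = A, OF fin] jc
    by (simp add: implementable_def jointly_coherent_def)
qed

lemma eps_implements_mono:
  assumes "eps_implements A u M \<eta> F \<epsilon> \<mu>" "\<epsilon> \<le> \<epsilon>'"
  shows "eps_implements A u M \<eta> F \<epsilon>' \<mu>"
proof -
  have "eps_optimal A u M q \<sigma> \<epsilon> \<Longrightarrow> eps_optimal A u M q \<sigma> \<epsilon>'" for q \<sigma>
    using assms(2) unfolding eps_optimal_def by force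
  then show ?thesis using assms(1) unfolding eps_implements_def by blast
qed

text \<open>Since \<open>F\<close> may contain arbitrary real functions, every jointly coherent outcome is
  exactly implementable.\<close>

theorem proposition1:
  fixes A :: "'n::finite \<Rightarrow> 'a set"
    and u :: "'n \<Rightarrow> ('n \<Rightarrow> 'a) \<Rightarrow> real"
  assumes fin: "\<And>i. finite (A i)"
    and ne: "\<And>i. A i \<noteq> {}"
  shows "(\<forall>\<mu>. is_dist (profiles A) \<mu> \<longrightarrow> implementable A u \<mu> \<longrightarrow> jointly_coherent A u \<mu>)
       \<and> (\<forall>\<mu>. jointly_coherent A u \<mu> \<longrightarrow>
            (\<forall>\<epsilon>>0. \<exists>M \<eta> F. eps_implements A u M \<eta> F \<epsilon> \<mu>))
       \<and> ((\<forall>i. \<forall>a\<in>profiles A. u i a \<in> \<rat>) \<longrightarrow>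
            (\<forall>\<mu>. is_dist (profiles A) \<mu> \<longrightarrow> (implementable A u \<mu> \<longleftrightarrow> jointly_coherent A u \<mu>)))"
proof -
  have sound: "jointly_coherent A u \<mu>" if "is_dist (profiles A) \<mu>" "implementable A u \<mu>" for \<mu>
    using that implements_imp_jointly_coherent[OF fin] by (auto simp: implementable_def)
  have approx: "\<exists>M \<eta> F. eps_implements A u M \<eta> F \<epsilon> \<mu>"
    if jc: "jointly_coherent A u \<mu>" and \<epsilon>: "0 < \<epsilon>" for \<mu> \<epsilon>
  proof -
    obtain M \<eta> F where "implements A u M \<eta> F \<mu>"
      using jointly_coherent_imp_implementable[OF fin jc] by (auto simp: implementable_def)
    then have "eps_implements A u M \<eta> F \<epsilon> \<mu>"
      using less_imp_le[OF \<epsilon>] by (rule eps_implements_mono)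
    then show ?thesis by blast
  qed
  show ?thesis using sound approx jointly_coherent_imp_implementable[where A = A, OF fin] by blast
qed

end
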